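(* Let $G$ be a semi-regular bipartite graph whose line graph $L(G)$ has at least $3$ vertices. Then $\lambda_3(L(G)) \le \frac{|V(L(G))|}{3}$.
   Context: A graph is semi-regular bipartite if it is bipartite with a bipartition $(V_1,V_2)$ such that all vertices of $V_1$ have the same degree $r_1$ and all vertices of $V_2$ have the same degree $r_2$. The line graph $L(G)$ has the edges of $G$ as vertices, two being adjacent when they share an endpoint. $\lambda_3$ denotes the third largest eigenvalue (with multiplicity) of the adjacency matrix. *)

theory Defs
  imports "Jordan_Normal_Form.Char_Poly" "HOL-Computational_Algebra.Polynomial"
begin

definition simple_graph :: "'a set \<Rightarrow> 'a set set \<Rightarrow> bool" where
  "simple_graph V E \<longleftrightarrow> finite V \<and>
     (\<forall>e\<in>E. \<exists>u v. u \<noteq> v \<and> u \<in> V \<and> v \<in> V \<and> e = {u, v})"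

definition degree :: "'a set set \<Rightarrow> 'a \<Rightarrow> nat" where
  "degree E v = card {e \<in> E. v \<in> e}"

definition semi_regular_bipartite :: "'a set \<Rightarrow> 'a set set \<Rightarrow> bool" where
  "semi_regular_bipartite V E \<longleftrightarrow>
     (\<exists>V1 V2 (r1::nat) (r2::nat). V1 \<union> V2 = V \<and> V1 \<inter> V2 = {} \<and>
        (\<forall>e\<in>E. card (e \<inter> V1) = 1 \<and> card (e \<inter> V2) = 1) \<and>
        (\<forall>v\<in>V1. degree E v = r1) \<and> (\<forall>v\<in>V2. degree E v = r2))"

definition line_adj :: "'a set \<Rightarrow> 'a set \<Rightarrow> bool" where
  "line_adj e f \<longleftrightarrow> e \<noteq> f \<and> e \<inter> f \<noteq> {}"

text \<open>Adjacency matrix of a finite graph (W, adj) w.r.t. some fixed enumeration of W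
  (the spectrum does not depend on the choice).\<close>
definition vertex_enum :: "'b set \<Rightarrow> nat \<Rightarrow> 'b" where
  "vertex_enum W = (SOME f. bij_betw f {..<card W} W)"

definition adj_matrix :: "'b set \<Rightarrow> ('b \<Rightarrow> 'b \<Rightarrow> bool) \<Rightarrow> real mat" where
  "adj_matrix W adj = mat (card W) (card W)
     (\<lambda>(i, j). if adj (vertex_enum W i) (vertex_enum W j) then 1 else 0)"

text \<open>Eigenvalues with multiplicity (roots of the characteristic polynomial),
  listed in non-increasing order; the k-th largest is at index k-1.\<close>
definition eigenvalues_desc :: "real mat \<Rightarrow> real list" where
  "eigenvalues_desc A = rev (sorted_list_of_multiset (proots (char_poly A)))"

definition kth_largest_eigenvalue :: "nat \<Rightarrow> real mat \<Rightarrow> real" where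
  "kth_largest_eigenvalue k A = eigenvalues_desc A ! (k - 1)"

end

theory Submission
  imports Defs "Jordan_Normal_Form.Schur_Decomposition"
begin

text \<open>
  Write \<open>m = |E|\<close> and \<open>d = r\<^sub>1 + r\<^sub>2 - 2\<close>; the line graph is \<open>d\<close>-regular, so all its
  eigenvalues lie in \<open>[-d, d]\<close>. If some \<open>u \<in> V\<^sub>1\<close>, \<open>v \<in> V\<^sub>2\<close> are not adjacent, then
  \<open>|V\<^sub>1| > r\<^sub>2\<close> and \<open>|V\<^sub>2| > r\<^sub>1\<close>, and \<open>m = r\<^sub>1|V\<^sub>1| = r\<^sub>2|V\<^sub>2|\<close> forces \<open>d \<le> m/3\<close>.
  Otherwise either \<open>r\<^sub>1 = 1\<close> or \<open>r\<^sub>2 = 1\<close> (a union of stars, whose line graph has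
  eigenvalues \<open>r - 1\<close> and \<open>-1\<close>), or \<open>G = K(p, q)\<close> with \<open>p, q \<ge> 2\<close>, whose line graph (the rook's graph) has
  eigenvalues in \<open>{p + q - 2, p - 2, q - 2, -2}\<close>. The eigenvalues sum to \<open>tr A = 0\<close> and
  their squares to \<open>tr A\<^sup>2 = m d\<close>. Hence \<open>g(\<lambda>) = \<lambda> + 1\<close>, resp. \<open>g(\<lambda>) = \<lambda>(\<lambda> + 2)\<close>, is
  nonnegative on the spectrum with total \<open>m\<close>, resp. \<open>m d\<close>, while \<open>g(\<lambda>)\<close> exceeds a third
  of that total as soon as \<open>\<lambda> > m/3\<close>; so at most two eigenvalues exceed \<open>m/3\<close>.
\<close>

section \<open>Real symmetric matrices\<close>

lemma conjugate_mult_mat_vec_of_real: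
  fixes A :: "real mat" and v :: "complex vec"
  assumes "A \<in> carrier_mat n n" "v \<in> carrier_vec n"
  shows "conjugate (of_real_hom.mat_hom A *\<^sub>v v) = of_real_hom.mat_hom A *\<^sub>v conjugate v"
  using assms by (intro eq_vecI) (auto simp: scalar_prod_def sum_conjugate conjugate_dist_mul)

lemma eigenvalue_of_real_symmetric_mat_Reals:
  fixes A :: "real mat" and a :: complex
  assumes A: "A \<in> carrier_mat n n" and sym: "transpose_mat A = A"
    and "eigenvalue (of_real_hom.mat_hom A) a"
  shows "a \<in> \<real>"
proof -
  let ?C = "of_real_hom.mat_hom A :: complex mat"
  have C: "?C \<in> carrier_mat n n" using A by simp
  have "A $$ (j, i) = A $$ (i, j)" if "i < n" "j < n" for i j
    using A that by (metis sym index_transpose_mat(1) carrier_matD)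
  then have symC: "transpose_mat ?C = ?C" using A by (intro eq_matI) auto
  obtain v where "eigenvector ?C v a" using assms(3) unfolding eigenvalue_def by blast
  then have v: "v \<in> carrier_vec n" "v \<noteq> 0\<^sub>v n" and Cv: "?C *\<^sub>v v = a \<cdot>\<^sub>v v"
    using C unfolding eigenvector_def by auto
  have "a * (v \<bullet>c v) = (?C *\<^sub>v v) \<bullet>c v" using v Cv by simp
  also have "\<dots> = (transpose_mat ?C *\<^sub>v v) \<bullet> conjugate v" using symC by simp
  also have "\<dots> = v \<bullet> (?C *\<^sub>v conjugate v)" using C v by (intro transpose_vec_mult_scalar) auto
  also have "\<dots> = v \<bullet>c (?C *\<^sub>v v)" using A v by (simp add: conjugate_mult_mat_vec_of_real)
  also have "\<dots> = cnj a * (v \<bullet>c v)" using v Cv by (simp add: conjugate_smult_vec)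
  finally have "a = cnj a" using v by simp
  then show ?thesis using Reals_cnj_iff by metis
qed

interpretation of_real_poly_hom: map_poly_inj_idom_hom "of_real :: real \<Rightarrow> complex" ..

lemma char_poly_symmetric_real_mat_splits:
  fixes A :: "real mat"
  assumes A: "A \<in> carrier_mat n n" and sym: "transpose_mat A = A"
  obtains es where "char_poly A = (\<Prod>e\<leftarrow>es. [:- e, 1:])" and "length es = n"
proof -
  let ?C = "of_real_hom.mat_hom A :: complex mat"
  have C: "?C \<in> carrier_mat n n" using A by simp
  obtain as where as: "char_poly ?C = (\<Prod>a\<leftarrow>as. [:- a, 1:])" "length as = n"
    using char_poly_factorized[OF C] by blast
  have "a \<in> \<real>" if "a \<in> set as" for a
  proof -
    have "poly (char_poly ?C) a = 0" unfolding as(1) by (rule linear_poly_root[OF that])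
    then show ?thesis
      using eigenvalue_of_real_symmetric_mat_Reals[OF A sym] eigenvalue_root_char_poly[OF C] by blast
  qed
  then have as_of_real: "as = map of_real (map Re as)"
    by (induct as) (auto simp: Reals_def)
  have "map_poly of_real (char_poly A) = char_poly ?C"
    by (rule of_real_hom.char_poly_hom[OF A, symmetric])
  also have "\<dots> = map_poly of_real (\<Prod>e\<leftarrow>map Re as. [:- e, 1:])"
    unfolding as(1) by (subst as_of_real) (simp add: of_real_poly_hom.hom_prod_list o_def)
  finally have "char_poly A = (\<Prod>e\<leftarrow>map Re as. [:- e, 1:])" by (rule of_real_poly_hom.injectivity)
  from that[OF this] show ?thesis using as(2) by simp
qed

lemma proots_prod_linear_factors: "proots (\<Prod>e\<leftarrow>es. [:- e, 1:]) = mset (es :: 'a::idom list)"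
proof (induct es)
  case (Cons e es)
  have "(\<Prod>e\<leftarrow>es. [:- e, 1:]) \<noteq> 0" by (auto simp: prod_list_zero_iff)
  then show ?case using Cons proots_mult[of "[:- e, 1:]" "\<Prod>e\<leftarrow>es. [:- e, 1:]"] by simp
qed simp

lemma kth_largest_eigenvalue_split:
  assumes "char_poly A = (\<Prod>e\<leftarrow>es. [:- e, 1:])"
  shows "kth_largest_eigenvalue k A = rev (sort es) ! (k - 1)"
  by (simp add: assms kth_largest_eigenvalue_def eigenvalues_desc_def proots_prod_linear_factors
      sorted_list_of_multiset_mset)

definition mat_trace :: "'a::comm_ring_1 mat \<Rightarrow> 'a" where
  "mat_trace A = (\<Sum>i<dim_row A. A $$ (i, i))"

lemma mat_trace_mult_comm:
  fixes A B :: "'a::comm_ring_1 mat"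
  assumes "A \<in> carrier_mat n m" "B \<in> carrier_mat m n"
  shows "mat_trace (A * B) = mat_trace (B * A)"
proof -
  have "mat_trace (A * B) = (\<Sum>i<n. \<Sum>k<m. A $$ (i, k) * B $$ (k, i))"
    using assms by (auto simp: mat_trace_def scalar_prod_def lessThan_atLeast0 intro!: sum.cong)
  also have "\<dots> = (\<Sum>k<m. \<Sum>i<n. B $$ (k, i) * A $$ (i, k))"
    by (subst sum.swap) (simp add: mult.commute)
  also have "\<dots> = mat_trace (B * A)"
    using assms by (auto simp: mat_trace_def scalar_prod_def lessThan_atLeast0 intro!: sum.cong)
  finally show ?thesis .
qed

lemma mat_trace_similar:
  assumes "similar_mat_wit A B P Q"
  shows "mat_trace A = mat_trace B"
proof -
  define n where "n = dim_row A"
  have carr: "A \<in> carrier_mat n n" "B \<in> carrier_mat n n" "P \<in> carrier_mat n n" "Q \<in> carrier_mat n n"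
    and QP: "Q * P = 1\<^sub>m n" and AB: "A = P * B * Q"
    using similar_mat_witD[OF n_def assms] by auto
  have "mat_trace A = mat_trace (P * (B * Q))" using carr AB by (simp add: assoc_mult_mat)
  also have "\<dots> = mat_trace (B * Q * P)" using carr by (intro mat_trace_mult_comm) auto
  also have "B * Q * P = B" using carr QP by (simp add: assoc_mult_mat[of B n n Q n P n])
  finally show ?thesis .
qed

lemma mat_trace_eq_sum_list_diag_mat: "mat_trace A = sum_list (diag_mat A)"
  by (simp add: mat_trace_def diag_mat_def lessThan_atLeast0 interv_sum_list_conv_sum_set_nat)

lemma upper_triangular_mult_diag:
  fixes A B :: "'a::comm_ring_1 mat"
  assumes A: "A \<in> carrier_mat n n" "upper_triangular A" and B: "B \<in> carrier_mat n n" "upper_triangular B"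
    and i: "i < n"
  shows "(A * B) $$ (i, i) = A $$ (i, i) * B $$ (i, i)"
proof -
  have "(A * B) $$ (i, i) = (\<Sum>k<n. A $$ (i, k) * B $$ (k, i))"
    using A B i by (auto simp: scalar_prod_def lessThan_atLeast0 intro!: sum.cong)
  also have "\<dots> = (\<Sum>k\<in>{i}. A $$ (i, k) * B $$ (k, i))"
  proof (rule sum.mono_neutral_right)
    show "\<forall>k\<in>{..<n} - {i}. A $$ (i, k) * B $$ (k, i) = 0"
    proof
      fix k assume k: "k \<in> {..<n} - {i}"
      show "A $$ (i, k) * B $$ (k, i) = 0"
      proof (cases "k < i")
        case True then show ?thesis using A i by (simp add: upper_triangularD)
      next
        case False then show ?thesis using B k by (simp add: upper_triangularD)
      qed
    qed
  qed (use i in auto)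
  finally show ?thesis by simp
qed

lemma sum_roots_char_poly:
  fixes A :: "'a::conjugatable_ordered_field mat"
  assumes A: "A \<in> carrier_mat n n" and split: "char_poly A = (\<Prod>e\<leftarrow>es. [:- e, 1:])"
  shows "sum_list es = mat_trace A" and "(\<Sum>e\<leftarrow>es. e\<^sup>2) = mat_trace (A * A)"
proof -
  obtain B P Q where "schur_decomposition A es = (B, P, Q)" by (cases "schur_decomposition A es")
  with schur_decomposition[OF A split] have sim: "similar_mat_wit A B P Q"
    and B: "upper_triangular B" and es: "es = diag_mat B" by auto
  have Bc: "B \<in> carrier_mat n n" using similar_mat_witD2[OF A sim] by blast
  show "sum_list es = mat_trace A"
    unfolding es mat_trace_similar[OF sim] by (rule mat_trace_eq_sum_list_diag_mat[symmetric])
  have "similar_mat_wit (A ^\<^sub>m 2) (B ^\<^sub>m 2) P Q" by (rule similar_mat_wit_pow[OF sim])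
  moreover have "A ^\<^sub>m 2 = A * A" "B ^\<^sub>m 2 = B * B" using A Bc by (simp_all add: numeral_2_eq_2)
  ultimately have "mat_trace (A * A) = mat_trace (B * B)" by (simp add: mat_trace_similar)
  also have "\<dots> = (\<Sum>i<n. (B $$ (i, i))\<^sup>2)"
    using Bc upper_triangular_mult_diag[OF Bc B Bc B]
    by (simp add: mat_trace_def power2_eq_square del: index_mult_mat(1))
  also have "\<dots> = (\<Sum>e\<leftarrow>es. e\<^sup>2)"
    using Bc by (simp add: es diag_mat_def lessThan_atLeast0 interv_sum_list_conv_sum_set_nat)
  finally show "(\<Sum>e\<leftarrow>es. e\<^sup>2) = mat_trace (A * A)" ..
qed

section \<open>Adjacency matrices\<close>

text \<open>Eigenvectors are indexed by the vertices themselves, which frees the graph-theoretic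
  arguments from the enumeration \<^const>\<open>vertex_enum\<close> underlying \<^const>\<open>adj_matrix\<close>.\<close>

definition graph_eigenvalue :: "'b set \<Rightarrow> ('b \<Rightarrow> 'b \<Rightarrow> bool) \<Rightarrow> real \<Rightarrow> bool" where
  "graph_eigenvalue W adj \<mu> \<longleftrightarrow>
     (\<exists>y. (\<exists>w\<in>W. y w \<noteq> 0) \<and> (\<forall>w\<in>W. \<mu> * y w = (\<Sum>u\<in>{u\<in>W. adj w u}. y u)))"

lemma bij_betw_vertex_enum:
  assumes "finite W"
  shows "bij_betw (vertex_enum W) {..<card W} W"
proof -
  have "\<exists>f. bij_betw f {..<card W} W"
    using ex_bij_betw_nat_finite[OF assms] by (simp add: lessThan_atLeast0)
  then show ?thesis unfolding vertex_enum_def by (rule someI_ex)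
qed

lemma dim_adj_matrix [simp]:
  "dim_row (adj_matrix W adj) = card W" "dim_col (adj_matrix W adj) = card W"
  by (simp_all add: adj_matrix_def)

lemma adj_matrix_carrier: "adj_matrix W adj \<in> carrier_mat (card W) (card W)"
  by (simp add: carrier_matI)

lemma index_adj_matrix:
  "i < card W \<Longrightarrow> j < card W \<Longrightarrow>
    adj_matrix W adj $$ (i, j) = (if adj (vertex_enum W i) (vertex_enum W j) then 1 else 0)"
  by (simp add: adj_matrix_def)

lemma transpose_adj_matrix: "symp adj \<Longrightarrow> transpose_mat (adj_matrix W adj) = adj_matrix W adj"
  by (intro eq_matI) (auto simp: index_adj_matrix dest: sympD)

lemma mat_trace_adj_matrix: "irreflp adj \<Longrightarrow> mat_trace (adj_matrix W adj) = 0"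
  by (simp add: mat_trace_def index_adj_matrix irreflpD)

lemma sum_vertex_enum:
  assumes "finite W"
  shows "(\<Sum>j<card W. f (vertex_enum W j)) = (\<Sum>w\<in>W. f w)"
  by (rule sum.reindex_bij_betw[OF bij_betw_vertex_enum[OF assms]])

lemma mat_trace_adj_matrix_square:
  assumes W: "finite W" and sym: "symp adj"
  shows "mat_trace (adj_matrix W adj * adj_matrix W adj) = (\<Sum>w\<in>W. real (card {u\<in>W. adj w u}))"
proof -
  let ?A = "adj_matrix W adj" and ?en = "vertex_enum W"
  have "(?A * ?A) $$ (i, i) = real (card {u\<in>W. adj (?en i) u})" if i: "i < card W" for i
  proof -
    have "(?A * ?A) $$ (i, i) = (\<Sum>j<card W. if adj (?en i) (?en j) then 1 else 0)"
      using i by (auto simp: scalar_prod_def index_adj_matrix lessThan_atLeast0 dest: sympD[OF sym]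
          intro!: sum.cong)
    also have "\<dots> = (\<Sum>u\<in>W. if adj (?en i) u then 1 else 0)"
      by (rule sum_vertex_enum[OF W])
    also have "\<dots> = real (card {u\<in>W. adj (?en i) u})"
      using W by (simp flip: sum.inter_filter)
    finally show ?thesis .
  qed
  then have "mat_trace (?A * ?A) = (\<Sum>j<card W. real (card {u\<in>W. adj (?en j) u}))"
    by (simp add: mat_trace_def del: index_mult_mat(1))
  also have "\<dots> = (\<Sum>w\<in>W. real (card {u\<in>W. adj w u}))" using W by (rule sum_vertex_enum)
  finally show ?thesis .
qed

lemma graph_eigenvalue_if_eigenvalue_adj_matrix:
  assumes W: "finite W" and "eigenvalue (adj_matrix W adj) \<mu>"
  shows "graph_eigenvalue W adj \<mu>"
proof -
  let ?n = "card W" and ?A = "adj_matrix W adj" and ?en = "vertex_enum W"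
  obtain v where "eigenvector ?A v \<mu>" using assms(2) unfolding eigenvalue_def by blast
  then have v: "v \<in> carrier_vec ?n" "v \<noteq> 0\<^sub>v ?n" and Av: "?A *\<^sub>v v = \<mu> \<cdot>\<^sub>v v"
    unfolding eigenvector_def by auto
  have bij: "bij_betw ?en {..<?n} W" using W by (rule bij_betw_vertex_enum)
  define y where "y = (\<lambda>w. v $ the_inv_into {..<?n} ?en w)"
  have y_en: "y (?en j) = v $ j" if "j < ?n" for j
    using bij that by (simp add: y_def bij_betw_def the_inv_into_f_f)
  have eq: "\<mu> * y (?en i) = (\<Sum>u\<in>{u\<in>W. adj (?en i) u}. y u)" if i: "i < ?n" for i
  proof -
    have "\<mu> * y (?en i) = (?A *\<^sub>v v) $ i" using Av i v by (simp add: y_en)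
    also have "\<dots> = (\<Sum>j<?n. if adj (?en i) (?en j) then y (?en j) else 0)"
      using i v by (auto simp: scalar_prod_def index_adj_matrix y_en lessThan_atLeast0 intro!: sum.cong)
    also have "\<dots> = (\<Sum>u\<in>W. if adj (?en i) u then y u else 0)"
      by (rule sum_vertex_enum[OF W])
    also have "\<dots> = (\<Sum>u\<in>{u\<in>W. adj (?en i) u}. y u)"
      using W by (simp flip: sum.inter_filter)
    finally show ?thesis .
  qed
  have "\<forall>w\<in>W. \<mu> * y w = (\<Sum>u\<in>{u\<in>W. adj w u}. y u)"
  proof
    fix w assume "w \<in> W"
    then obtain i where "i < ?n" "w = ?en i" using bij by (metis bij_betw_def imageE lessThan_iff)
    then show "\<mu> * y w = (\<Sum>u\<in>{u\<in>W. adj w u}. y u)" using eq by simp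
  qed
  moreover obtain j where "j < ?n" "v $ j \<noteq> 0"
    using v by (metis vec_eq_iff carrier_vecD index_zero_vec(1) index_zero_vec(2))
  then have "?en j \<in> W" "y (?en j) \<noteq> 0" using bij by (auto simp: y_en bij_betw_def)
  ultimately show ?thesis unfolding graph_eigenvalue_def by blast
qed

lemma graph_eigenvalue_abs_le_degree:
  assumes W: "finite W" and "graph_eigenvalue W adj \<mu>"
    and deg: "\<And>w. w \<in> W \<Longrightarrow> real (card {u\<in>W. adj w u}) \<le> d"
  shows "\<bar>\<mu>\<bar> \<le> d"
proof -
  obtain y where nz: "\<exists>w\<in>W. y w \<noteq> 0" and eig: "\<forall>w\<in>W. \<mu> * y w = (\<Sum>u\<in>{u\<in>W. adj w u}. y u)"
    using assms(2) unfolding graph_eigenvalue_def by blast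
  \<comment> \<open>evaluate the eigen-equation where \<open>\<bar>y\<bar>\<close> is maximal\<close>
  have "Max ((\<lambda>u. \<bar>y u\<bar>) ` W) \<in> (\<lambda>u. \<bar>y u\<bar>) ` W" using W nz by (intro Max_in) auto
  then obtain w where w: "w \<in> W" and "\<bar>y w\<bar> = Max ((\<lambda>u. \<bar>y u\<bar>) ` W)" by auto
  then have max: "\<And>u. u \<in> W \<Longrightarrow> \<bar>y u\<bar> \<le> \<bar>y w\<bar>" using W by simp
  have pos: "\<bar>y w\<bar> > 0" using nz max by force
  have "\<bar>\<mu>\<bar> * \<bar>y w\<bar> = \<bar>\<Sum>u\<in>{u\<in>W. adj w u}. y u\<bar>" using eig w by (simp flip: abs_mult)
  also have "\<dots> \<le> (\<Sum>u\<in>{u\<in>W. adj w u}. \<bar>y u\<bar>)" by (rule sum_abs)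
  also have "\<dots> \<le> (\<Sum>u\<in>{u\<in>W. adj w u}. \<bar>y w\<bar>)" by (rule sum_mono) (simp add: max)
  also have "\<dots> \<le> d * \<bar>y w\<bar>" using deg[OF w] pos by (simp add: mult_right_mono)
  finally show ?thesis using pos by simp
qed

section \<open>Lists with few entries above a threshold\<close>

lemma sum_list_map_filter_le:
  fixes g :: "'a \<Rightarrow> 'b::ordered_comm_monoid_add"
  assumes "\<And>x. x \<in> set xs \<Longrightarrow> 0 \<le> g x"
  shows "sum_list (map g (filter P xs)) \<le> sum_list (map g xs)"
  using assms by (induct xs) (auto intro: add_increasing add_left_mono)

lemma length_filter_greater_le_two:
  fixes xs :: "real list" and g :: "real \<Rightarrow> real"
  assumes nonneg: "\<And>x. x \<in> set xs \<Longrightarrow> 0 \<le> g x"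
    and large: "\<And>x. x \<in> set xs \<Longrightarrow> t < x \<Longrightarrow> sum_list (map g xs) < 3 * g x"
  shows "length (filter (\<lambda>x. t < x) xs) \<le> 2"
proof (rule ccontr)
  define S where "S = sum_list (map g xs)"
  define F where "F = filter (\<lambda>x. t < x) xs"
  assume "\<not> length (filter (\<lambda>x. t < x) xs) \<le> 2"
  then have F: "3 \<le> length F" "F \<noteq> []" unfolding F_def by auto
  have "0 \<le> S" unfolding S_def using nonneg by (intro sum_list_nonneg) auto
  then have "3 * S \<le> real (length F) * S" using F(1) by (intro mult_right_mono) auto
  then have "S \<le> real (length F) * (S / 3)" by simp
  also have "\<dots> = (\<Sum>x\<leftarrow>F. S / 3)" by (simp add: sum_list_triv)
  also have "\<dots> < sum_list (map g F)"
    using F(2) large by (intro sum_list_strict_mono) (force simp: F_def S_def)+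
  also have "\<dots> \<le> S" unfolding F_def S_def using nonneg by (rule sum_list_map_filter_le)
  finally show False by simp
qed

lemma third_largest_le:
  fixes xs :: "'a::linorder list"
  assumes len: "3 \<le> length xs" and few: "length (filter (\<lambda>x. t < x) xs) \<le> 2"
  shows "rev (sort xs) ! 2 \<le> t"
proof (rule ccontr)
  define ys where "ys = rev (sort xs)"
  assume "\<not> rev (sort xs) ! 2 \<le> t"
  moreover have "3 \<le> length ys" using len by (simp add: ys_def)
  then obtain a b c zs where ys: "ys = a # b # c # zs"
    by (cases ys; cases "tl ys"; cases "tl (tl ys)") auto
  moreover have "sorted (rev zs @ [c, b, a])"
    using sorted_sort[of xs] by (metis rev_rev_ident ys_def ys rev.simps append.assoc append_Cons append_Nil)
  then have "c \<le> b" "b \<le> a" by (auto simp: sorted_append)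
  ultimately have "t < c" "t < b" "t < a" by (auto simp: ys_def[symmetric] not_le)
  then have "3 \<le> length (filter (\<lambda>x. t < x) ys)" by (simp add: ys)
  moreover have "mset ys = mset xs" by (simp add: ys_def)
  then have "length (filter (\<lambda>x. t < x) ys) = length (filter (\<lambda>x. t < x) xs)"
    by (metis mset_filter size_mset)
  ultimately show False using few by simp
qed

lemma few_above_third_if_ge_minus_one:
  fixes xs :: "real list"
  assumes ge: "\<And>x. x \<in> set xs \<Longrightarrow> -1 \<le> x" and sum: "sum_list xs = 0"
  shows "length (filter (\<lambda>x. real (length xs) / 3 < x) xs) \<le> 2"
proof (rule length_filter_greater_le_two)
  have "(\<Sum>x\<leftarrow>xs. x + 1) = real (length xs)"
    using sum by (simp add: sum_list_addf sum_list_triv)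
  then show "(\<Sum>x\<leftarrow>xs. x + 1) < 3 * (x + 1)" if "real (length xs) / 3 < x" for x
    using that by simp
  show "0 \<le> x + 1" if "x \<in> set xs" for x
    using ge[OF that] by simp
qed

lemma rook_eigenvalue_large:
  fixes p q :: nat and x :: real
  assumes p: "2 \<le> p" and q: "2 \<le> q"
    and x: "x = real p + real q - 2 \<or> x = real p - 2 \<or> x = real q - 2"
    and large: "real (p * q) / 3 < x"
  shows "real (p * q) * (real p + real q - 2) < 3 * (x * (x + 2))"
proof -
  have small_side: "real (a * b) * (real a + real b - 2) < 3 * (y * (y + 2))"
    if a: "2 \<le> a" and y: "y = real b - 2" and large: "real (a * b) / 3 < y" for a b :: nat and y :: real
  proof -
    have "real a * real b < 3 * real b" using large y by simp
    then have "a = 2" using a by (simp add: mult_less_cancel_right)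
    then have b: "6 < real b" using large y by simp
    then have "2 * real b * real b < 3 * (real b - 2) * real b" by (intro mult_strict_right_mono) auto
    then show ?thesis unfolding y \<open>a = 2\<close> by (simp add: algebra_simps)
  qed
  consider "x = real p + real q - 2" | "x = real p - 2" | "x = real q - 2" using x by blast
  then show ?thesis
  proof cases
    case 1
    have "0 < x" using large of_nat_0_le_iff[of "p * q"] by linarith
    have "real (p * q) < 3 * x" using large by simp
    then have "real (p * q) * x < (3 * x) * x" using \<open>0 < x\<close> by (rule mult_strict_right_mono)
    also have "\<dots> \<le> 3 * (x * (x + 2))" using \<open>0 < x\<close> by (simp add: algebra_simps)
    finally show ?thesis using 1 by simp
  next
    case 2
    have "real (q * p) / 3 < x" using large by (simp add: mult.commute)
    from small_side[OF q 2 this] show ?thesis by (simp add: ac_simps)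
  next
    case 3
    from small_side[OF p 3 large] show ?thesis .
  qed
qed

lemma few_above_third_rook:
  fixes xs :: "real list" and p q :: nat
  assumes p: "2 \<le> p" and q: "2 \<le> q"
    and spectrum: "\<And>x. x \<in> set xs \<Longrightarrow>
      x = real p + real q - 2 \<or> x = real p - 2 \<or> x = real q - 2 \<or> x = -2"
    and sum: "sum_list xs = 0"
    and sum_squares: "(\<Sum>x\<leftarrow>xs. x\<^sup>2) = real (p * q) * (real p + real q - 2)"
  shows "length (filter (\<lambda>x. real (p * q) / 3 < x) xs) \<le> 2"
proof (rule length_filter_greater_le_two)
  have "(\<Sum>x\<leftarrow>xs. x * (x + 2)) = (\<Sum>x\<leftarrow>xs. x\<^sup>2) + 2 * sum_list xs"
    by (induct xs) (simp_all add: algebra_simps power2_eq_square)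
  then have "(\<Sum>x\<leftarrow>xs. x * (x + 2)) = real (p * q) * (real p + real q - 2)"
    using sum sum_squares by simp
  moreover have "x = real p + real q - 2 \<or> x = real p - 2 \<or> x = real q - 2"
    if "x \<in> set xs" "real (p * q) / 3 < x" for x
    using spectrum[OF that(1)] that(2) by (auto simp: divide_less_eq)
  ultimately show "(\<Sum>x\<leftarrow>xs. x * (x + 2)) < 3 * (x * (x + 2))"
    if "x \<in> set xs" "real (p * q) / 3 < x" for x
    using rook_eigenvalue_large[OF p q _ that(2)] that by simp
  show "0 \<le> x * (x + 2)" if "x \<in> set xs" for x
    using spectrum[OF that] p q by auto
qed

lemma biregular_degree_bound:
  fixes r1 r2 m :: nat
  assumes r: "2 \<le> r1" "2 \<le> r2" and m: "(r2 + 1) * r1 \<le> m" "(r1 + 1) * r2 \<le> m"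
  shows "3 * (r1 + r2) \<le> m + 6"
proof (cases "r1 = 2 \<or> r2 = 2")
  case True
  then show ?thesis using m by auto
next
  case False
  then have "0 \<le> (int r1 - 2) * (int r2 - 3)" using r by simp
  moreover have "int r1 * int r2 + int r2 \<le> int m"
    using m(2) by (simp add: algebra_simps flip: of_nat_mult of_nat_add)
  ultimately show ?thesis by (simp add: algebra_simps)
qed

section \<open>Line graphs of biregular graphs\<close>

lemma symp_line_adj: "symp line_adj"
  by (auto simp: symp_def line_adj_def)

lemma irreflp_line_adj: "irreflp line_adj"
  by (simp add: irreflp_def line_adj_def)

locale biregular_graph =
  fixes E :: "'a set set" and V1 V2 :: "'a set" and r1 r2 :: nat
  assumes finite_V1: "finite V1" and finite_V2: "finite V2"
    and disjoint: "V1 \<inter> V2 = {}"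
    and edge_ends: "e \<in> E \<Longrightarrow> \<exists>u\<in>V1. \<exists>v\<in>V2. e = {u, v}"
    and degree_V1: "u \<in> V1 \<Longrightarrow> degree E u = r1"
    and degree_V2: "v \<in> V2 \<Longrightarrow> degree E v = r2"

context biregular_graph
begin

lemma swap: "biregular_graph E V2 V1 r2 r1"
  using biregular_graph_axioms unfolding biregular_graph_def by (auto simp: insert_commute) blast

definition edges_at :: "'a \<Rightarrow> 'a set set" where
  "edges_at w = {e \<in> E. w \<in> e}"

lemma finite_E: "finite E"
proof (rule finite_subset)
  show "E \<subseteq> Pow (V1 \<union> V2)" using edge_ends by blast
qed (use finite_V1 finite_V2 in simp)

lemma finite_edges_at: "finite (edges_at w)"
  using finite_E by (simp add: edges_at_def)

lemma card_edges_at_V1: "u \<in> V1 \<Longrightarrow> card (edges_at u) = r1"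
  using degree_V1 by (simp add: edges_at_def degree_def)

lemma sum_edges_at_V2: "(\<Sum>v\<in>V2. sum y (edges_at v)) = sum y E"
proof -
  have "(\<Sum>v\<in>V2. sum y (edges_at v)) = (\<Sum>e\<in>E. \<Sum>v | v \<in> V2 \<and> v \<in> e. y e)"
    unfolding edges_at_def by (rule sum.swap_restrict[OF finite_V2 finite_E])
  also have "\<dots> = (\<Sum>e\<in>E. y e)"
  proof (rule sum.cong[OF refl])
    fix e assume "e \<in> E"
    then obtain u v where "u \<in> V1" "v \<in> V2" "e = {u, v}" using edge_ends by blast
    then have "{w. w \<in> V2 \<and> w \<in> e} = {v}" using disjoint by auto
    then show "(\<Sum>w | w \<in> V2 \<and> w \<in> e. y e) = y e" by simp
  qed
  finally show ?thesis .
qed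

lemma card_E: "card E = card V2 * r2"
  using sum_edges_at_V2[of "\<lambda>_. 1::nat"] biregular_graph.card_edges_at_V1[OF swap] by simp

lemma edge_at_V2:
  assumes "v \<in> V2" "f \<in> edges_at v"
  obtains u where "u \<in> V1" "f = {u, v}"
  using assms edge_ends disjoint unfolding edges_at_def by blast

lemma edge_at_V1:
  assumes "u \<in> V1" "f \<in> edges_at u"
  obtains v where "v \<in> V2" "f = {u, v}"
  using biregular_graph.edge_at_V2[OF swap assms] by (metis insert_commute)

lemma line_neighbours:
  assumes e: "{u, v} \<in> E" and u: "u \<in> V1" and v: "v \<in> V2"
  shows "{f \<in> E. line_adj {u, v} f} = (edges_at u \<union> edges_at v) - {{u, v}}"
    and "edges_at u \<inter> edges_at v = {{u, v}}"
proof -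
  show "{f \<in> E. line_adj {u, v} f} = (edges_at u \<union> edges_at v) - {{u, v}}"
    by (auto simp: line_adj_def edges_at_def)
  have "f = {u, v}" if "f \<in> edges_at u" "v \<in> f" for f
    using edge_at_V1[OF u that(1)] that(2) u v disjoint by (metis IntI empty_iff insertE)
  then show "edges_at u \<inter> edges_at v = {{u, v}}" using e by (auto simp: edges_at_def)
qed

lemma sum_line_neighbours:
  fixes y :: "'a set \<Rightarrow> 'b::ring_1"
  assumes "{u, v} \<in> E" "u \<in> V1" "v \<in> V2"
  shows "(\<Sum>f\<in>{f \<in> E. line_adj {u, v} f}. y f)
    = sum y (edges_at u) + sum y (edges_at v) - 2 * y {u, v}"
proof -
  have "{u, v} \<in> edges_at u \<union> edges_at v" using assms(1) by (simp add: edges_at_def)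
  then show ?thesis
    using sum_Un[of "edges_at u" "edges_at v" y] line_neighbours[OF assms]
    by (simp add: sum_diff1 finite_edges_at mult_2)
qed

lemma card_line_neighbours:
  assumes "e \<in> E"
  shows "real (card {f \<in> E. line_adj e f}) = real r1 + real r2 - 2"
proof -
  obtain u v where uv: "u \<in> V1" "v \<in> V2" "e = {u, v}" using edge_ends[OF assms] by blast
  have "real (card {f \<in> E. line_adj e f}) = (\<Sum>f\<in>{f \<in> E. line_adj e f}. 1)" by simp
  also have "\<dots> = real r1 + real r2 - 2"
    using sum_line_neighbours[of u v "\<lambda>_. 1::real"] assms uv
      card_edges_at_V1 biregular_graph.card_edges_at_V1[OF swap] by simp
  finally show ?thesis .
qed

lemma line_eigen_equation_at_edge:
  fixes y :: "'a set \<Rightarrow> real"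
  assumes eig: "\<forall>e\<in>E. \<mu> * y e = (\<Sum>f\<in>{f \<in> E. line_adj e f}. y f)"
    and e: "{u, v} \<in> E" "u \<in> V1" "v \<in> V2"
  shows "(\<mu> + 2) * y {u, v} = sum y (edges_at u) + sum y (edges_at v)"
  using eig e sum_line_neighbours[OF e, of y] by (simp add: algebra_simps)

lemma line_eigenvalue_if_pendant:
  assumes r1: "r1 = 1" and "graph_eigenvalue E line_adj \<mu>"
  shows "\<mu> = real r2 - 1 \<or> \<mu> = -1"
proof -
  obtain y where nz: "\<exists>e\<in>E. y e \<noteq> 0"
    and eig: "\<forall>e\<in>E. \<mu> * y e = (\<Sum>f\<in>{f \<in> E. line_adj e f}. y f)"
    using assms(2) unfolding graph_eigenvalue_def by blast
  have at_edge: "(\<mu> + 1) * y {u, v} = sum y (edges_at v)"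
    if e: "{u, v} \<in> E" "u \<in> V1" "v \<in> V2" for u v
  proof -
    have "{u, v} \<in> edges_at u" "card (edges_at u) = 1"
      using card_edges_at_V1[OF e(2)] e(1) r1 by (simp_all add: edges_at_def)
    then have "edges_at u = {{u, v}}" by (metis card_1_singletonE singletonD)
    then show ?thesis using line_eigen_equation_at_edge[OF eig e] by (simp add: algebra_simps)
  qed
  have at_vertex: "(\<mu> + 1) * sum y (edges_at v) = real r2 * sum y (edges_at v)"
    if v: "v \<in> V2" for v
  proof -
    have "(\<mu> + 1) * sum y (edges_at v) = (\<Sum>f\<in>edges_at v. sum y (edges_at v))"
      unfolding sum_distrib_left
    proof (rule sum.cong[OF refl])
      fix f assume f: "f \<in> edges_at v"
      then obtain u where "u \<in> V1" "f = {u, v}" by (rule edge_at_V2[OF v])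
      moreover have "f \<in> E" using f by (simp add: edges_at_def)
      ultimately show "(\<mu> + 1) * y f = sum y (edges_at v)" using at_edge v by blast
    qed
    also have "\<dots> = real r2 * sum y (edges_at v)"
      using biregular_graph.card_edges_at_V1[OF swap v] by simp
    finally show ?thesis .
  qed
  show ?thesis
  proof (rule ccontr)
    assume other: "\<not> ?thesis"
    have "sum y (edges_at v) = 0" if "v \<in> V2" for v
    proof -
      have "(\<mu> + 1 - real r2) * sum y (edges_at v) = 0"
        using at_vertex[OF that] by (simp add: algebra_simps)
      then show ?thesis using other by simp
    qed
    then have "y e = 0" if "e \<in> E" for e
      using edge_ends[OF that] at_edge other that by force
    then show False using nz by blast
  qed
qed

definition is_complete :: bool where
  "is_complete \<longleftrightarrow> (\<forall>u\<in>V1. \<forall>v\<in>V2. {u, v} \<in> E)"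

lemma is_complete_swap: "is_complete \<longleftrightarrow> biregular_graph.is_complete E V2 V1"
proof -
  interpret swapped: biregular_graph E V2 V1 r2 r1 by (rule swap)
  show ?thesis unfolding is_complete_def swapped.is_complete_def by (metis insert_commute)
qed

lemma edges_at_V1_if_complete:
  assumes complete: "is_complete" and u: "u \<in> V1"
  shows "edges_at u = (\<lambda>v. {u, v}) ` V2"
proof
  show "edges_at u \<subseteq> (\<lambda>v. {u, v}) ` V2" by (auto elim: edge_at_V1[OF u])
  show "(\<lambda>v. {u, v}) ` V2 \<subseteq> edges_at u" using complete u by (auto simp: is_complete_def edges_at_def)
qed

lemma inj_on_edge_from: "u \<in> V1 \<Longrightarrow> inj_on (\<lambda>v. {u, v}) V2"
  using disjoint by (auto simp: inj_on_def doubleton_eq_iff)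

lemma card_V2_if_complete:
  assumes complete: "is_complete" and u: "u \<in> V1"
  shows "card V2 = r1"
  using card_edges_at_V1[OF u] card_image[OF inj_on_edge_from[OF u]]
  by (simp add: edges_at_V1_if_complete[OF complete u])

lemma line_eigenvector_row_sum_if_complete:
  fixes y :: "'a set \<Rightarrow> real"
  assumes complete: "is_complete"
    and eig: "\<forall>e\<in>E. \<mu> * y e = (\<Sum>f\<in>{f \<in> E. line_adj e f}. y f)"
    and u: "u \<in> V1"
  shows "(\<mu> + 2) * sum y (edges_at u) = real r1 * sum y (edges_at u) + sum y E"
proof -
  have "(\<mu> + 2) * sum y (edges_at u) = (\<Sum>v\<in>V2. (\<mu> + 2) * y {u, v})"
    by (simp add: edges_at_V1_if_complete[OF complete u] sum.reindex[OF inj_on_edge_from[OF u]]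
        sum_distrib_left)
  also have "\<dots> = (\<Sum>v\<in>V2. sum y (edges_at u) + sum y (edges_at v))"
    using line_eigen_equation_at_edge[OF eig _ u] complete u by (simp add: is_complete_def)
  also have "\<dots> = real r1 * sum y (edges_at u) + sum y E"
    by (simp add: sum.distrib sum_edges_at_V2 card_V2_if_complete[OF complete u])
  finally show ?thesis .
qed

text \<open>Viewing an eigenvector as a \<open>V\<^sub>1 \<times> V\<^sub>2\<close> matrix, its row sums, column sums and total
  satisfy a linear system that has only the trivial solution unless \<open>\<mu>\<close> is one of the four
  values; and a trivial solution forces the eigenvector itself to vanish.\<close>

lemma line_eigenvalue_if_complete:
  assumes complete: "is_complete"
    and "graph_eigenvalue E line_adj \<mu>"
  shows "\<mu> = real r1 + real r2 - 2 \<or> \<mu> = real r1 - 2 \<or> \<mu> = real r2 - 2 \<or> \<mu> = -2"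
proof (rule ccontr)
  interpret swapped: biregular_graph E V2 V1 r2 r1 by (rule swap)
  have complete': "swapped.is_complete" using complete is_complete_swap by simp
  assume other: "\<not> ?thesis"
  obtain y where nz: "\<exists>e\<in>E. y e \<noteq> 0"
    and eig: "\<forall>e\<in>E. \<mu> * y e = (\<Sum>f\<in>{f \<in> E. line_adj e f}. y f)"
    using assms(2) unfolding graph_eigenvalue_def by blast
  then obtain v0 where v0: "v0 \<in> V2" by (metis edge_ends)
  define T where "T = sum y E"
  note row = line_eigenvector_row_sum_if_complete[OF complete eig, folded T_def]
  note col = swapped.line_eigenvector_row_sum_if_complete[OF complete' eig, folded T_def]
  have "(\<mu> + 2) * T = (\<Sum>u\<in>V1. (\<mu> + 2) * sum y (edges_at u))"
    by (simp add: T_def swapped.sum_edges_at_V2 sum_distrib_left)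
  also have "\<dots> = (\<Sum>u\<in>V1. real r1 * sum y (edges_at u) + T)" using row by simp
  also have "\<dots> = real r1 * T + real (card V1) * T"
    by (simp add: sum.distrib swapped.sum_edges_at_V2 T_def flip: sum_distrib_left)
  also have "\<dots> = (real r1 + real r2) * T"
    using swapped.card_V2_if_complete[OF complete' v0] by (simp add: algebra_simps)
  finally have "(\<mu> + 2 - (real r1 + real r2)) * T = 0" by (simp add: algebra_simps)
  then have T0: "T = 0" using other by simp
  have "sum y (edges_at u) = 0" if "u \<in> V1" for u
  proof -
    have "(\<mu> + 2 - real r1) * sum y (edges_at u) = 0"
      using row[OF that] T0 by (simp add: algebra_simps)
    then show ?thesis using other by simp
  qed
  moreover have "sum y (edges_at v) = 0" if "v \<in> V2" for v
  proof -
    have "(\<mu> + 2 - real r2) * sum y (edges_at v) = 0"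
      using col[OF that] T0 by (simp add: algebra_simps)
    then show ?thesis using other by simp
  qed
  ultimately have "y e = 0" if "e \<in> E" for e
    using edge_ends[OF that] line_eigen_equation_at_edge[OF eig] other that by force
  then show False using nz by blast
qed

lemma r1_less_card_V2_if_missing_edge:
  assumes u: "u \<in> V1" and v: "v \<in> V2" and missing: "{u, v} \<notin> E"
  shows "r1 < card V2"
proof -
  have "edges_at u \<subseteq> (\<lambda>w. {u, w}) ` (V2 - {v})"
  proof
    fix f assume f: "f \<in> edges_at u"
    then obtain w where "w \<in> V2" "f = {u, w}" by (rule edge_at_V1[OF u])
    moreover have "f \<in> E" using f by (simp add: edges_at_def)
    ultimately show "f \<in> (\<lambda>w. {u, w}) ` (V2 - {v})" using missing by auto
  qed
  then have "r1 \<le> card ((\<lambda>w. {u, w}) ` (V2 - {v}))"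
    using card_edges_at_V1[OF u] finite_V2 by (metis card_mono finite_Diff finite_imageI)
  also have "\<dots> \<le> card (V2 - {v})" by (rule card_image_le) (use finite_V2 in simp)
  also have "\<dots> < card V2" using finite_V2 v by (rule card_Diff1_less)
  finally show ?thesis .
qed

lemma card_E_if_complete:
  assumes complete: "is_complete" and "E \<noteq> {}"
  shows "card E = r1 * r2"
proof -
  interpret swapped: biregular_graph E V2 V1 r2 r1 by (rule swap)
  obtain v where "v \<in> V2" using \<open>E \<noteq> {}\<close> edge_ends by blast
  moreover have "swapped.is_complete" using complete is_complete_swap by simp
  ultimately show ?thesis using swapped.card_E swapped.card_V2_if_complete by simp
qed

lemma line_eigenvalue_le_third_if_incomplete:
  assumes incomplete: "\<not> is_complete" and r: "2 \<le> r1" "2 \<le> r2"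
    and "graph_eigenvalue E line_adj \<mu>"
  shows "\<mu> \<le> real (card E) / 3"
proof -
  interpret swapped: biregular_graph E V2 V1 r2 r1 by (rule swap)
  obtain u v where uv: "u \<in> V1" "v \<in> V2" "{u, v} \<notin> E"
    using incomplete unfolding is_complete_def by blast
  have "r1 < card V2" using r1_less_card_V2_if_missing_edge[OF uv] .
  then have "(r1 + 1) * r2 \<le> card E" unfolding card_E by (intro mult_right_mono) auto
  have "r2 < card V1"
    using swapped.r1_less_card_V2_if_missing_edge[OF uv(2,1)] uv(3) by (simp add: insert_commute)
  then have "(r2 + 1) * r1 \<le> card E" unfolding swapped.card_E by (intro mult_right_mono) auto
  have "3 * (r1 + r2) \<le> card E + 6" by (rule biregular_degree_bound) fact+
  then have "real (3 * (r1 + r2)) \<le> real (card E + 6)" by (simp only: of_nat_le_iff)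
  then have "real r1 + real r2 - 2 \<le> real (card E) / 3" by simp
  moreover have "\<bar>\<mu>\<bar> \<le> real r1 + real r2 - 2"
    using graph_eigenvalue_abs_le_degree[OF finite_E assms(4)] card_line_neighbours by simp
  ultimately show ?thesis by linarith
qed

lemma few_large_line_eigenvalues:
  assumes eig: "\<And>x. x \<in> set es \<Longrightarrow> graph_eigenvalue E line_adj x"
    and len: "length es = card E" and "E \<noteq> {}"
    and sum: "sum_list es = 0"
    and sum_squares: "(\<Sum>x\<leftarrow>es. x\<^sup>2) = real (card E) * (real r1 + real r2 - 2)"
  shows "length (filter (\<lambda>x. real (card E) / 3 < x) es) \<le> 2"
proof -
  interpret swapped: biregular_graph E V2 V1 r2 r1 by (rule swap)
  have "0 < r1" "0 < r2" using \<open>E \<noteq> {}\<close> card_E swapped.card_E finite_E by (auto simp: card_gt_0_iff)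
  then consider "r1 = 1" | "r2 = 1"
    | "2 \<le> r1" "2 \<le> r2" "is_complete" | "2 \<le> r1" "2 \<le> r2" "\<not> is_complete"
    by linarith
  then show ?thesis
  proof cases
    case 1
    then show ?thesis
      using few_above_third_if_ge_minus_one[of es] line_eigenvalue_if_pendant eig sum len by force
  next
    case 2
    then show ?thesis
      using few_above_third_if_ge_minus_one[of es] swapped.line_eigenvalue_if_pendant eig sum len
      by force
  next
    case 3
    then show ?thesis
      using few_above_third_rook[of r1 r2 es] line_eigenvalue_if_complete eig sum sum_squares
        card_E_if_complete[OF 3(3) \<open>E \<noteq> {}\<close>]
      by simp
  next
    case 4
    then show ?thesis
      using line_eigenvalue_le_third_if_incomplete eig by (simp add: not_less[symmetric] filter_empty_conv)
  qed
qed

end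

lemma biregular_graph_if_semi_regular_bipartite:
  assumes "simple_graph V E" and "semi_regular_bipartite V E"
  obtains V1 V2 r1 r2 where "biregular_graph E V1 V2 r1 r2"
proof -
  obtain V1 V2 r1 r2 where V: "V1 \<union> V2 = V" "V1 \<inter> V2 = {}"
    and ends: "\<forall>e\<in>E. card (e \<inter> V1) = 1 \<and> card (e \<inter> V2) = 1"
    and deg: "\<forall>v\<in>V1. degree E v = r1" "\<forall>v\<in>V2. degree E v = r2"
    using assms(2) unfolding semi_regular_bipartite_def by blast
  have "\<exists>u\<in>V1. \<exists>v\<in>V2. e = {u, v}" if e: "e \<in> E" for e
  proof -
    have "card (e \<inter> V1) = 1" "card (e \<inter> V2) = 1" using ends e by auto
    then obtain u v where "e \<inter> V1 = {u}" "e \<inter> V2 = {v}" by (elim card_1_singletonE)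
    moreover have "e \<subseteq> V" using assms(1) e unfolding simple_graph_def by auto
    then have "e = (e \<inter> V1) \<union> (e \<inter> V2)" using V(1) by blast
    ultimately show ?thesis by auto
  qed
  moreover have "finite V1" "finite V2" using assms(1) V(1) unfolding simple_graph_def by auto
  ultimately have "biregular_graph E V1 V2 r1 r2" using V(2) deg by unfold_locales auto
  then show ?thesis by (rule that)
qed

theorem theorem3p4:
  fixes V :: "'a set" and E :: "'a set set"
  assumes "simple_graph V E"
    and "semi_regular_bipartite V E"
    and "card E \<ge> 3"
  shows "kth_largest_eigenvalue 3 (adj_matrix E line_adj) \<le> real (card E) / 3"
proof -
  obtain V1 V2 r1 r2 where "biregular_graph E V1 V2 r1 r2"
    using assms(1,2) by (rule biregular_graph_if_semi_regular_bipartite)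
  then interpret biregular_graph E V1 V2 r1 r2 .
  let ?A = "adj_matrix E line_adj"
  have A: "?A \<in> carrier_mat (card E) (card E)" "transpose_mat ?A = ?A"
    by (simp_all add: adj_matrix_carrier transpose_adj_matrix symp_line_adj)
  obtain es where split: "char_poly ?A = (\<Prod>e\<leftarrow>es. [:- e, 1:])" and len: "length es = card E"
    using char_poly_symmetric_real_mat_splits[OF A] by blast
  have "sum_list es = 0"
    using sum_roots_char_poly(1)[OF A(1) split] by (simp add: mat_trace_adj_matrix irreflp_line_adj)
  moreover have "(\<Sum>x\<leftarrow>es. x\<^sup>2) = real (card E) * (real r1 + real r2 - 2)"
    using sum_roots_char_poly(2)[OF A(1) split]
    by (simp add: mat_trace_adj_matrix_square[OF finite_E symp_line_adj] card_line_neighbours)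
  moreover have "graph_eigenvalue E line_adj x" if "x \<in> set es" for x
    using linear_poly_root[OF that] split eigenvalue_root_char_poly[OF A(1)]
      graph_eigenvalue_if_eigenvalue_adj_matrix[OF finite_E] by metis
  ultimately have "length (filter (\<lambda>x. real (card E) / 3 < x) es) \<le> 2"
    using few_large_line_eigenvalues len assms(3) by force
  then have "rev (sort es) ! 2 \<le> real (card E) / 3"
    using len assms(3) by (intro third_largest_le) auto
  then show ?thesis by (simp add: kth_largest_eigenvalue_split[OF split])
qed

end
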